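(* Let $f\in\mathbb C[U]$ be a polynomial in one variable such that $\mathcal L(f^m)=0$ for all integers $m\ge1$. Then $f=0$.
   Context: $\mathcal L:\mathbb C[U]\to\mathbb C$ is the $\mathbb C$-linear map defined by $\mathcal L(U^{\ell})=\ell!$ for all $\ell\ge0$. *)

theory Defs
  imports "HOL-Computational_Algebra.Polynomial" Complex_Main
begin

definition L_functional :: "complex poly \<Rightarrow> complex" where
  "L_functional p = (\<Sum>i\<le>degree p. coeff p i * of_nat (fact i))"

end

theory Submission
  imports Defs "HOL-Analysis.Uniform_Limit" "HOL-Real_Asymp.Real_Asymp"
begin

text \<open>
  Let \<open>f\<close> have degree \<open>d > 0\<close> and leading coefficient \<open>c\<close>, and write the normalised
  reversed polynomial as \<open>R = reflect f / c = 1 + b U + \<dots>\<close>, where \<open>b\<close> is the next-to-leading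
  coefficient of \<open>f\<close> divided by \<open>c\<close>.  Reflecting the sum defining \<open>L\<close> gives that
  \<open>L(f^m) / (c^m (dm)!)\<close> is the sum over \<open>k \<le> dm\<close> of \<open>[U^k] R^m \<cdot> (dm-k)!/(dm)!\<close>.
  For fixed \<open>k\<close> the \<open>k\<close>-th term tends to \<open>(b/d)^k/k!\<close> as \<open>m \<rightarrow> \<infinity>\<close>, because
  \<open>[U^k] R^m\<close> is the sum over \<open>j \<le> k\<close> of \<open>(m choose j) [U^k](R-1)^j\<close> and only \<open>j = k\<close> survives the
  normalisation; and the terms are dominated by \<open>B^k/k!\<close> uniformly in \<open>m\<close>.  By Tannery's theorem
  the normalised moments therefore converge to \<open>exp (b/d) \<noteq> 0\<close>, so \<open>L(f^m) \<noteq> 0\<close> for large \<open>m\<close>.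
\<close>

lemma binomial_times_fact_eq_prod:
  "real (n choose k) * fact k = (\<Prod>i<k. real n - real i)"
  using gbinomial_mult_fact'[of "real n" k] by (simp add: binomial_gbinomial atLeast0LessThan)

lemma fact_ratio_eq_prod:
  assumes "k \<le> n"
  shows "(fact (n - k) :: real) / fact n = 1 / (\<Prod>i<k. real n - real i)"
proof -
  have "(fact n :: real) = real (n choose k) * fact k * fact (n - k)"
    using assms by (simp add: binomial_fact)
  then show ?thesis by (simp add: binomial_times_fact_eq_prod)
qed

text \<open>\<open>(m choose j) (n-k)!/n!\<close> as a product of \<open>k\<close> simple quotients, which makes its
  asymptotics (for \<open>n = d m\<close>) visible factor by factor.\<close>
lemma binomial_fact_ratio_eq:
  assumes "j \<le> k" "k \<le> n"
  shows "real (m choose j) * fact (n - k) / fact n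
         = (\<Prod>i<k. (if i < j then real m - real i else 1) / (real n - real i)) / fact j"
proof -
  have "(\<Prod>i<k. (if i < j then real m - real i else 1)) = (\<Prod>i\<in>{..<k} \<inter> {..<j}. real m - real i)"
    by (subst prod.inter_restrict) auto
  also have "\<dots> = real (m choose j) * fact j"
    using assms(1) by (simp add: binomial_times_fact_eq_prod Int_absorb1)
  finally have "(\<Prod>i<k. (if i < j then real m - real i else 1)) = real (m choose j) * fact j" .
  then show ?thesis
    using fact_ratio_eq_prod[OF assms(2)]
    by (simp add: prod_dividef times_divide_eq_right[symmetric] del: times_divide_eq_right)
qed

text \<open>For \<open>j \<le> k\<close>, \<open>(m choose j) (dm-k)!/(dm)!\<close> behaves like \<open>m^(j-k)\<close>: it tends to
  \<open>1/(k! d^k)\<close> if \<open>j = k\<close> and to \<open>0\<close> otherwise.\<close>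
lemma binomial_fact_ratio_limit:
  fixes d j k :: nat
  assumes "d > 0" "j \<le> k"
  shows "(\<lambda>m. real (m choose j) * fact (d * m - k) / fact (d * m))
           \<longlonglongrightarrow> (if j = k then 1 / (fact k * real d ^ k) else 0)"
proof -
  define g where "g i m = (if i < j then real m - real i else 1) / (real d * real m - real i)"
    for i m
  have g_lim: "(\<lambda>m. g i m) \<longlonglongrightarrow> (if i < j then inverse (real d) else 0)" for i
  proof -
    have "real d > 0" using assms(1) by simp
    then have "(\<lambda>m::nat. (real m - real i) / (real d * real m - real i)) \<longlonglongrightarrow> inverse (real d)"
          and "(\<lambda>m::nat. 1 / (real d * real m - real i)) \<longlonglongrightarrow> 0"
      by real_asymp+
    then show ?thesis by (simp add: g_def)
  qed
  have limit_value: "(\<Prod>i<k. (if i < j then inverse (real d) else 0)) / fact j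
                       = (if j = k then 1 / (fact k * real d ^ k) else 0)"
    using assms(2) by (auto simp: power_inverse field_simps intro!: prod_zero)
  have "(\<lambda>m. (\<Prod>i<k. g i m) / fact j) \<longlonglongrightarrow> (if j = k then 1 / (fact k * real d ^ k) else 0)"
    unfolding limit_value[symmetric] by (intro tendsto_divide tendsto_prod g_lim tendsto_const) auto
  moreover have "eventually (\<lambda>m. (\<Prod>i<k. g i m) / fact j
                   = real (m choose j) * fact (d * m - k) / fact (d * m)) sequentially"
    using eventually_ge_at_top[of k]
  proof eventually_elim
    case (elim m)
    moreover have "m \<le> d * m" using assms(1) by simp
    ultimately have "k \<le> d * m" by linarith
    then show ?case
      using binomial_fact_ratio_eq[OF assms(2), of "d * m" m] by (simp add: g_def)
  qed
  ultimately show ?thesis by (rule Lim_transform_eventually)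
qed

text \<open>Powers of a polynomial without constant term: \<open>(U Q)^j = U^j Q^j\<close>.\<close>
lemma coeff_power_pCons_0:
  fixes Q :: "'a::comm_semiring_1 poly"
  shows "coeff (pCons 0 Q ^ j) k = (if k < j then 0 else coeff (Q ^ j) (k - j))"
proof -
  have "pCons 0 Q = [:0, 1:] * Q" by simp
  then have "pCons 0 Q ^ j = monom 1 j * Q ^ j"
    by (simp only: power_mult_distrib monom_altdef smult_1_left)
  then show ?thesis by (simp add: coeff_monom_mult)
qed

lemma coeff_power_pCons_1:
  fixes Q :: "'a::comm_semiring_1 poly"
  shows "coeff (pCons 1 Q ^ m) k = (\<Sum>j\<le>k. of_nat (m choose j) * coeff (pCons 0 Q ^ j) k)"
proof -
  have "pCons 1 Q = pCons 0 Q + 1" by (simp add: one_pCons)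
  then have "coeff (pCons 1 Q ^ m) k = (\<Sum>j\<le>m. of_nat (m choose j) * coeff (pCons 0 Q ^ j) k)"
    by (simp add: binomial_ring coeff_sum of_nat_poly)
  also have "\<dots> = (\<Sum>j\<le>max m k. of_nat (m choose j) * coeff (pCons 0 Q ^ j) k)"
    by (rule sum.mono_neutral_left) (auto simp: binomial_eq_0)
  also have "\<dots> = (\<Sum>j\<le>k. of_nat (m choose j) * coeff (pCons 0 Q ^ j) k)"
    by (rule sum.mono_neutral_right) (auto simp: coeff_power_pCons_0)
  finally show ?thesis .
qed

lemma normalized_coeff_limit:
  fixes Q :: "'a::real_normed_field poly"
  assumes "d > 0"
  shows "(\<lambda>m. coeff (pCons 1 Q ^ m) k * of_real (fact (d * m - k) / fact (d * m)))
           \<longlonglongrightarrow> (coeff Q 0 / of_nat d) ^ k /\<^sub>R fact k"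
proof -
  let ?c = "\<lambda>j. coeff (pCons 0 Q ^ j) k"
  have expand: "coeff (pCons 1 Q ^ m) k * of_real r
                  = (\<Sum>j\<le>k. ?c j * of_real (real (m choose j) * r))" for m r
    unfolding coeff_power_pCons_1 sum_distrib_right by (simp add: of_real_mult mult_ac)
  have "(\<lambda>m. \<Sum>j\<le>k. ?c j * of_real (real (m choose j) * fact (d * m - k) / fact (d * m)))
          \<longlonglongrightarrow> (\<Sum>j\<le>k. ?c j * of_real (if j = k then 1 / (fact k * real d ^ k) else 0))"
    by (intro tendsto_sum tendsto_mult tendsto_const tendsto_of_real binomial_fact_ratio_limit assms)
       auto
  also have "(\<Sum>j\<le>k. ?c j * of_real (if j = k then 1 / (fact k * real d ^ k) else 0))
               = coeff Q 0 ^ k * of_real (1 / (fact k * real d ^ k))"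
    by (simp add: if_distrib coeff_power_pCons_0 coeff_0_power cong: if_cong)
  also have "\<dots> = (coeff Q 0 / of_nat d) ^ k /\<^sub>R fact k"
    by (simp add: scaleR_conv_of_real power_divide divide_inverse power_inverse power_mult_distrib)
  finally show ?thesis
    by (simp only: expand times_divide_eq_right)
qed

lemma coeff_binomial_majorant:
  fixes R :: "'a::real_normed_vector poly"
  assumes "norm (coeff R 0) \<le> 1" "degree R \<le> d"
  obtains B where "B \<ge> 1" "\<And>i. norm (coeff R i) \<le> real (d choose i) * B ^ i"
proof -
  define B where "B = 1 + (\<Sum>i\<le>d. norm (coeff R i))"
  have "B \<ge> 1" by (simp add: B_def sum_nonneg)
  moreover have "norm (coeff R i) \<le> real (d choose i) * B ^ i" for i
  proof (cases "i = 0 \<or> d < i")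
    case True
    then show ?thesis using assms \<open>B \<ge> 1\<close> by (auto simp: coeff_eq_0)
  next
    case False
    have "norm (coeff R i) \<le> (\<Sum>i\<le>d. norm (coeff R i))"
      using False by (intro member_le_sum) auto
    also have "\<dots> \<le> B" by (simp add: B_def)
    also have "B \<le> B ^ i" using \<open>B \<ge> 1\<close> False by (simp add: self_le_power)
    also have "B ^ i \<le> real (d choose i) * B ^ i"
    proof -
      have "d choose i \<ge> 1" using False by (simp add: Suc_leI zero_less_binomial)
      then show ?thesis using \<open>B \<ge> 1\<close> by (simp add: mult_le_cancel_right1)
    qed
    finally show ?thesis .
  qed
  ultimately show ?thesis by (rule that)
qed

text \<open>Coefficientwise domination by \<open>(1 + B U)^d\<close> passes to powers (Vandermonde's identity).\<close>
lemma coeff_power_majorant: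
  fixes R :: "'a::real_normed_field poly"
  assumes "B \<ge> 0" and R_bound: "\<And>i. norm (coeff R i) \<le> real (d choose i) * B ^ i"
  shows "norm (coeff (R ^ m) k) \<le> real (d * m choose k) * B ^ k"
proof (induction m arbitrary: k)
  case 0
  show ?case by (cases k) auto
next
  case (Suc m)
  have "norm (coeff (R ^ Suc m) k) \<le> (\<Sum>i\<le>k. norm (coeff R i) * norm (coeff (R ^ m) (k - i)))"
    by (simp add: coeff_mult norm_mult sum_norm_le)
  also have "\<dots> \<le> (\<Sum>i\<le>k. (real (d choose i) * B ^ i) * (real (d * m choose (k - i)) * B ^ (k - i)))"
    using assms(1) by (intro sum_mono mult_mono R_bound Suc.IH) auto
  also have "\<dots> = (\<Sum>i\<le>k. B ^ k * real ((d choose i) * (d * m choose (k - i))))"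
  proof (rule sum.cong)
    fix i assume "i \<in> {..k}"
    then have "B ^ i * B ^ (k - i) = B ^ k" by (simp flip: power_add)
    then show "real (d choose i) * B ^ i * (real (d * m choose (k - i)) * B ^ (k - i))
                 = B ^ k * real ((d choose i) * (d * m choose (k - i)))"
      by (simp add: algebra_simps)
  qed simp
  also have "\<dots> = B ^ k * real (\<Sum>i\<le>k. (d choose i) * (d * m choose (k - i)))"
    by (simp add: sum_distrib_left)
  also have "\<dots> = real (d * Suc m choose k) * B ^ k"
    by (simp only: vandermonde) (simp add: algebra_simps)
  finally show ?case .
qed

text \<open>The main analytic step: the normalised sums converge to \<open>exp (Q(0)/d)\<close>.  The terms are
  dominated by \<open>B^k/k!\<close>, so Tannery's theorem lets us pass to the limit termwise.\<close>
lemma normalized_sum_limit: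
  fixes Q :: "'a::{real_normed_field, banach} poly"
  assumes "d > 0" "degree (pCons 1 Q) \<le> d"
  shows "(\<lambda>m. \<Sum>k\<le>d * m. coeff (pCons 1 Q ^ m) k * of_real (fact (d * m - k) / fact (d * m)))
           \<longlonglongrightarrow> exp (coeff Q 0 / of_nat d)"
proof -
  obtain B where "B \<ge> 1" and R_bound: "\<And>i. norm (coeff (pCons 1 Q) i) \<le> real (d choose i) * B ^ i"
    using coeff_binomial_majorant[of "pCons 1 Q" d] assms(2) by auto
  define T where "T k m = (if k \<le> d * m
                     then coeff (pCons 1 Q ^ m) k * of_real (fact (d * m - k) / fact (d * m)) else 0)"
    for k m
  have T_bound: "norm (T k m) \<le> B ^ k / fact k" for k m
  proof (cases "k \<le> d * m")
    case True
    have "norm (T k m) = norm (coeff (pCons 1 Q ^ m) k) * (fact (d * m - k) / fact (d * m))"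
      using True by (simp add: T_def norm_mult norm_divide norm_fact)
    also have "\<dots> \<le> real (d * m choose k) * B ^ k * (fact (d * m - k) / fact (d * m))"
      using \<open>B \<ge> 1\<close> by (intro mult_right_mono coeff_power_majorant[OF _ R_bound]) auto
    also have "\<dots> = B ^ k / fact k"
      using True by (simp add: binomial_fact field_simps)
    finally show ?thesis .
  qed (use \<open>B \<ge> 1\<close> in \<open>simp add: T_def\<close>)
  have T_limit: "(\<lambda>m. T k m) \<longlonglongrightarrow> (coeff Q 0 / of_nat d) ^ k /\<^sub>R fact k" for k
  proof -
    have "eventually (\<lambda>m. coeff (pCons 1 Q ^ m) k * of_real (fact (d * m - k) / fact (d * m))
                          = T k m) sequentially"
      using eventually_ge_at_top[of k]
    proof eventually_elim
      case (elim m)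
      moreover have "m \<le> d * m" using assms(1) by simp
      ultimately have "k \<le> d * m" by linarith
      then show ?case by (simp add: T_def)
    qed
    with normalized_coeff_limit[OF assms(1)] show ?thesis by (rule Lim_transform_eventually)
  qed
  have majorant_summable: "summable (\<lambda>k. B ^ k / fact k)"
    using summable_exp_generic[of B] by (simp add: divide_inverse mult_ac)
  have "(\<lambda>m. \<Sum>k. T k m) \<longlonglongrightarrow> (\<Sum>k. (coeff Q 0 / of_nat d) ^ k /\<^sub>R fact k)"
    using tannerys_theorem[where a = T and M = "\<lambda>k. B ^ k / fact k", OF T_limit _ majorant_summable] T_bound
    by (simp add: always_eventually)
  moreover have "(\<Sum>k. (coeff Q 0 / of_nat d) ^ k /\<^sub>R fact k) = exp (coeff Q 0 / of_nat d)"
    using exp_converges[of "coeff Q 0 / of_nat d"] by (simp add: sums_iff)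
  moreover have "(\<Sum>k. T k m)
                   = (\<Sum>k\<le>d * m. coeff (pCons 1 Q ^ m) k * of_real (fact (d * m - k) / fact (d * m)))"
    for m
  proof -
    have "(\<lambda>k. T k m) sums (\<Sum>k\<le>d * m. T k m)" by (rule sums_finite) (auto simp: T_def)
    moreover have "(\<Sum>k\<le>d * m. T k m)
                     = (\<Sum>k\<le>d * m. coeff (pCons 1 Q ^ m) k * of_real (fact (d * m - k) / fact (d * m)))"
      by (rule sum.cong) (simp_all add: T_def)
    ultimately show ?thesis by (simp add: sums_iff)
  qed
  ultimately show ?thesis by simp
qed

lemma L_functional_reflect:
  "L_functional p = (\<Sum>k\<le>degree p. coeff (reflect_poly p) k * fact (degree p - k))"
proof -
  have "L_functional p = (\<Sum>i\<le>degree p. coeff p i * fact i)"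
    by (simp add: L_functional_def)
  also have "\<dots> = (\<Sum>k\<le>degree p. coeff p (degree p - k) * fact (degree p - k))"
    by (rule sum.reindex_bij_witness[of _ "\<lambda>k. degree p - k" "\<lambda>k. degree p - k"]) auto
  also have "\<dots> = (\<Sum>k\<le>degree p. coeff (reflect_poly p) k * fact (degree p - k))"
    by (intro sum.cong refl) (simp add: coeff_reflect_poly)
  finally show ?thesis .
qed

theorem L_functional_power_asymptotics:
  fixes f :: "complex poly"
  assumes "degree f > 0"
  shows "(\<lambda>m. L_functional (f ^ m) / (lead_coeff f ^ m * fact (degree f * m)))
           \<longlonglongrightarrow> exp (coeff f (degree f - 1) / (of_nat (degree f) * lead_coeff f))"
proof -
  define d c where "d = degree f" and "c = lead_coeff f"
  have "f \<noteq> 0" and "c \<noteq> 0" using assms by (auto simp: c_def)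
  define R where "R = smult (inverse c) (reflect_poly f)"
  have "coeff R 0 = 1" using \<open>c \<noteq> 0\<close> by (simp add: R_def c_def)
  then obtain Q where R_eq: "R = pCons 1 Q" by (cases R rule: pCons_cases) auto
  have "coeff Q 0 = coeff R 1" by (simp add: R_eq)
  also have "\<dots> = coeff f (d - 1) / c"
    using assms by (simp add: R_def d_def coeff_reflect_poly field_simps)
  finally have Q0: "coeff Q 0 = coeff f (d - 1) / c" .
  have "degree R \<le> d"
    unfolding R_def d_def by (meson degree_reflect_poly_le degree_smult_le order_trans)
  have moment: "L_functional (f ^ m) / (c ^ m * fact (d * m))
                  = (\<Sum>k\<le>d * m. coeff (R ^ m) k * of_real (fact (d * m - k) / fact (d * m)))" for m
  proof -
    have "degree (f ^ m) = d * m" using \<open>f \<noteq> 0\<close> by (simp add: degree_power_eq d_def)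
    moreover have "reflect_poly (f ^ m) = smult (c ^ m) (R ^ m)"
      using \<open>c \<noteq> 0\<close> by (simp add: reflect_poly_power R_def flip: smult_power)
    ultimately have "L_functional (f ^ m) = c ^ m * (\<Sum>k\<le>d * m. coeff (R ^ m) k * fact (d * m - k))"
      by (simp add: L_functional_reflect sum_distrib_left mult.assoc)
    then show ?thesis
      using \<open>c \<noteq> 0\<close> by (simp add: sum_divide_distrib)
  qed
  have "d > 0" using assms by (simp add: d_def)
  from normalized_sum_limit[OF this \<open>degree R \<le> d\<close>[unfolded R_eq]]
  have "(\<lambda>m. L_functional (f ^ m) / (c ^ m * fact (d * m))) \<longlonglongrightarrow> exp (coeff Q 0 / of_nat d)"
    by (simp only: moment R_eq)
  moreover have "coeff Q 0 / of_nat d = coeff f (d - 1) / (of_nat d * c)"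
    by (simp add: Q0 divide_divide_eq_left mult.commute)
  ultimately show ?thesis by (simp add: d_def c_def)
qed

theorem theorem4p9:
  fixes f :: "complex poly"
  assumes "\<And>m::nat. m \<ge> 1 \<Longrightarrow> L_functional (f ^ m) = 0"
  shows "f = 0"
proof (rule ccontr)
  assume "f \<noteq> 0"
  have "degree f > 0"
  proof (rule ccontr)
    assume "\<not> degree f > 0"
    then have "L_functional (f ^ 1) = lead_coeff f" by (simp add: L_functional_def)
    with assms[of 1] \<open>f \<noteq> 0\<close> show False by simp
  qed
  let ?e = "exp (coeff f (degree f - 1) / (of_nat (degree f) * lead_coeff f))"
  have "eventually (\<lambda>m. L_functional (f ^ m) / (lead_coeff f ^ m * fact (degree f * m)) = 0)
          sequentially"
    using eventually_ge_at_top[of 1] by eventually_elim (simp add: assms)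
  with L_functional_power_asymptotics[OF \<open>degree f > 0\<close>]
  have "(\<lambda>m. 0) \<longlonglongrightarrow> ?e" by (rule Lim_transform_eventually)
  then have "?e = 0" by (simp add: tendsto_const_iff)
  then show False by simp
qed

end
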